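(* Let $V$ be a topological real vector space, $N:V\to\mathbb{R}$ a function, and $\alpha>1$ a real number. The following are equivalent: (1) $N$ is strictly sub-convex and is a Minkowski norm on $V$. (2) $N$ is non-negative, positively homogeneous (i.e. $N(\lambda x)=\lambda N(x)$ for all $x\in V$, $\lambda>0$), continuous, and $N^{\alpha}$ is strictly convex.
   Context: Topological real vector spaces are not assumed Hausdorff. A Minkowski norm on a real vector space $V$ is a function $N:V\to\mathbb{R}$ that is non-negative, satisfies $N(\lambda x)=\lambda N(x)$ for all $x\in V$ and real $\lambda>0$, satisfies $N(x+y)\le N(x)+N(y)$ for all $x,y$, and satisfies $N(x)\neq 0$ for $x\neq 0$. A function $g$ on a convex set is strictly convex if $g((1-t)x+ty)<(1-t)g(x)+tg(y)$ for all distinct $x,y$ and $t\in(0,1)$. For $f:C\to\mathbb{R}$ and $r\in\mathbb{R}$, $S_r(f)=\{x\in C: f(x)\le r\}$. For a subset $S$, $\mathrm{Aff}(S)$ is its affine hull; $\mathrm{ri}(S)$ and $\mathrm{rc}(S)$ are the interior and closure of $S$ in the subspace topology of $\mathrm{Aff}(S)$. $]x,y[=\{(1-t)x+ty: t\in[0,1]\}\setminus\{x,y\}$. A subset $C$ is strictly convex if for any two distinct $x,y\in\mathrm{rc}(C)$ one has $]x,y[\subseteq\mathrm{ri}(C)$. A function $f:C\to\mathbb{R}$ is strictly sub-convex if $S_r(f)$ is strictly convex for every $r\in\mathbb{R}$. *)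

theory Defs
  imports "HOL-Analysis.Analysis"
begin

(* A topological real vector space: the type 'a carries a real vector space structure
   and a topology (not assumed Hausdorff) for which addition and scalar multiplication
   are continuous (product topologies on 'a \<times> 'a and real \<times> 'a). *)
definition tvs :: "('a::{real_vector,topological_space}) itself \<Rightarrow> bool" where
  "tvs _ \<longleftrightarrow>
     continuous_on UNIV (\<lambda>p::'a \<times> 'a. fst p + snd p) \<and>
     continuous_on UNIV (\<lambda>p::real \<times> 'a. fst p *\<^sub>R snd p)"

definition minkowski_norm :: "('a::real_vector \<Rightarrow> real) \<Rightarrow> bool" where
  "minkowski_norm N \<longleftrightarrow>
     (\<forall>x. 0 \<le> N x) \<and>
     (\<forall>x. \<forall>c>0. N (c *\<^sub>R x) = c * N x) \<and>
     (\<forall>x y. N (x + y) \<le> N x + N y) \<and>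
     (\<forall>x. x \<noteq> 0 \<longrightarrow> N x \<noteq> 0)"

definition strict_convex_fun_on :: "'a::real_vector set \<Rightarrow> ('a \<Rightarrow> real) \<Rightarrow> bool" where
  "strict_convex_fun_on C g \<longleftrightarrow>
     (\<forall>x\<in>C. \<forall>y\<in>C. x \<noteq> y \<longrightarrow>
        (\<forall>t. 0 < t \<and> t < 1 \<longrightarrow>
           g ((1 - t) *\<^sub>R x + t *\<^sub>R y) < (1 - t) * g x + t * g y))"

definition rel_closure :: "('a::{real_vector,topological_space}) set \<Rightarrow> 'a set" where
  "rel_closure S = (top_of_set (affine hull S)) closure_of S"

definition strictly_convex_set :: "('a::{real_vector,topological_space}) set \<Rightarrow> bool" where
  "strictly_convex_set C \<longleftrightarrow>
     (\<forall>x\<in>rel_closure C. \<forall>y\<in>rel_closure C. x \<noteq> y \<longrightarrow> open_segment x y \<subseteq> rel_interior C)"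

definition sublevel :: "'a set \<Rightarrow> ('a \<Rightarrow> real) \<Rightarrow> real \<Rightarrow> 'a set" where
  "sublevel C f r = {x\<in>C. f x \<le> r}"

definition strictly_sub_convex :: "('a::{real_vector,topological_space}) set \<Rightarrow> ('a \<Rightarrow> real) \<Rightarrow> bool" where
  "strictly_sub_convex C f \<longleftrightarrow> (\<forall>r. strictly_convex_set (sublevel C f r))"

end

theory Submission imports Defs begin

text \<open>
  Both conditions force positive homogeneity, so every sublevel set \<open>{N \<le> r}\<close> with \<open>r > 0\<close> is a
  dilate of the unit ball and has full affine hull; relative interiors and closures are then
  ordinary ones. If \<open>N\<close> is a strictly sub-convex norm, \<open>N\<^sup>\<alpha>\<close> is strictly convex: for \<open>N x \<noteq> N y\<close>
  this is strict convexity of \<open>t \<mapsto> t\<^sup>\<alpha>\<close>, and for \<open>N x = N y = r\<close> the open segment lies in the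
  interior of \<open>{N \<le> r}\<close>, where \<open>N < r\<close> by homogeneity. Continuity follows because \<open>0\<close>, lying on an
  open segment between two unit vectors, is an interior point of the unit ball, and a subadditive
  homogeneous function bounded near \<open>0\<close> is continuous. Conversely, convexity of \<open>N\<^sup>\<alpha>\<close> makes the
  unit ball convex, which by homogeneity is the triangle inequality; strict convexity of \<open>N\<^sup>\<alpha>\<close>
  along segments through \<open>0\<close> gives definiteness, and along arbitrary segments it puts open segments
  of the closed sublevel sets into the open set \<open>{N < r}\<close>.
\<close>

definition pos_homogeneous :: "('a::real_vector \<Rightarrow> real) \<Rightarrow> bool" where
  "pos_homogeneous N \<longleftrightarrow> (\<forall>x. \<forall>c>0. N (c *\<^sub>R x) = c * N x)"

lemma pos_homogeneousD: "pos_homogeneous N \<Longrightarrow> c > 0 \<Longrightarrow> N (c *\<^sub>R x) = c * N x"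
  unfolding pos_homogeneous_def by blast

lemma pos_homogeneous_zero: "pos_homogeneous N \<Longrightarrow> N 0 = 0"
  using pos_homogeneousD[of N 2 0] by simp

subsection \<open>Strict convexity of real powers\<close>

lemma powr_tangent_line_less:
  fixes a m x :: real
  assumes "a > 1" "m > 0" "x \<ge> 0" "x \<noteq> m"
  shows "m powr a + a * m powr (a - 1) * (x - m) < x powr a"
proof -
  define g where "g z = z powr a - a * m powr (a - 1) * z" for z
  have deriv: "DERIV g z :> a * (z powr (a - 1) - m powr (a - 1))" if "z > 0" for z
    unfolding g_def using that
    by (auto intro!: derivative_eq_intros simp: right_diff_distrib)
  have cont: "continuous_on {b..c} g" if "b \<ge> 0" for b c
    unfolding g_def using that assms(1)
    by (auto intro!: continuous_intros continuous_on_powr')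
  have "g m < g x"
  proof (cases "m < x")
    case True
    show ?thesis
    proof (rule DERIV_pos_imp_increasing_open[OF True _ cont])
      fix z assume "m < z" "z < x"
      with assms have "m powr (a - 1) < z powr (a - 1)" by (intro powr_less_mono2) auto
      with deriv[of z] \<open>m < z\<close> assms show "\<exists>d. DERIV g z :> d \<and> d > 0" by auto
    qed (use assms in simp)
  next
    case False
    with assms have "x < m" by simp
    show ?thesis
    proof (rule DERIV_neg_imp_decreasing_open[OF \<open>x < m\<close> _ cont])
      fix z assume "x < z" "z < m"
      with assms have "z powr (a - 1) < m powr (a - 1)" by (intro powr_less_mono2) auto
      with assms have "a * (z powr (a - 1) - m powr (a - 1)) < 0" by (simp add: mult_pos_neg)
      with deriv[of z] \<open>x < z\<close> assms show "\<exists>d. DERIV g z :> d \<and> d < 0" by auto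
    qed (use assms in simp)
  qed
  then show ?thesis
    unfolding g_def by (simp add: algebra_simps)
qed

lemma strict_convex_fun_on_powr:
  assumes "a > 1"
  shows "strict_convex_fun_on {0..} (\<lambda>x::real. x powr a)"
  unfolding strict_convex_fun_on_def
proof (intro ballI impI allI)
  fix x y t :: real
  assume x: "x \<in> {0..}" and y: "y \<in> {0..}" and "x \<noteq> y" and t: "0 < t \<and> t < 1"
  define m where "m = (1 - t) * x + t * y"
  have "m - x = t * (y - x)" "m - y = (1 - t) * (x - y)"
    unfolding m_def by (simp_all add: algebra_simps)
  with \<open>x \<noteq> y\<close> t have "x \<noteq> m" "y \<noteq> m" by auto
  have "m > 0"
    unfolding m_def using x y t \<open>x \<noteq> y\<close>
    by (smt (verit, ccfv_threshold) atLeast_iff mult_nonneg_nonneg mult_pos_pos)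
  define c where "c = a * m powr (a - 1)"
  \<comment> \<open>Average the two strict tangent-line inequalities at \<open>m\<close>; the linear parts cancel.\<close>
  have "m powr a = (1 - t) * (m powr a + c * (x - m)) + t * (m powr a + c * (y - m))"
    unfolding m_def by (simp add: algebra_simps)
  also have "\<dots> < (1 - t) * x powr a + t * y powr a"
    using powr_tangent_line_less[of a m x] powr_tangent_line_less[of a m y]
      assms x y t \<open>m > 0\<close> \<open>x \<noteq> m\<close> \<open>y \<noteq> m\<close>
    unfolding c_def by (intro add_strict_mono mult_strict_left_mono) auto
  finally show "((1 - t) *\<^sub>R x + t *\<^sub>R y) powr a < (1 - t) * x powr a + t * y powr a"
    unfolding m_def by simp
qed

lemma tvs_continuous_on_scaleR_diff:
  assumes "tvs TYPE('a::{real_vector,topological_space})"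
  shows "continuous_on UNIV (\<lambda>x::'a. c *\<^sub>R (x - p))"
proof -
  have add: "continuous_on UNIV (\<lambda>q::'a \<times> 'a. fst q + snd q)"
    and scale: "continuous_on UNIV (\<lambda>q::real \<times> 'a. fst q *\<^sub>R snd q)"
    using assms unfolding tvs_def by auto
  have "continuous_on UNIV (\<lambda>x::'a. x - p)"
    using continuous_on_compose2[OF add continuous_on_Pair[OF continuous_on_id continuous_on_const, of UNIV "- p"]]
    by simp
  then show ?thesis
    using continuous_on_compose2[OF scale continuous_on_Pair[OF continuous_on_const, of UNIV "\<lambda>x. x - p" c]]
    by simp
qed

lemma tvs_continuous_on_ray:
  assumes "tvs TYPE('a::{real_vector,topological_space})"
  shows "continuous_on UNIV (\<lambda>s::real. s *\<^sub>R (z::'a))"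
proof -
  have "continuous_on UNIV (\<lambda>q::real \<times> 'a. fst q *\<^sub>R snd q)"
    using assms unfolding tvs_def by auto
  from continuous_on_compose2[OF this continuous_on_Pair[OF continuous_on_id continuous_on_const, of UNIV z]]
  show ?thesis by simp
qed

lemma rel_interior_eq_interior:
  fixes S :: "'a::{real_vector,topological_space} set"
  assumes "affine hull S = UNIV"
  shows "rel_interior S = interior S"
  using assms unfolding rel_interior interior_def by auto

lemma rel_closure_eq_closure:
  assumes "affine hull S = UNIV"
  shows "rel_closure S = closure S"
  unfolding rel_closure_def assms by simp

lemma subset_rel_closure: "S \<subseteq> rel_closure S"
  unfolding rel_closure_def by (rule closure_of_subset) (simp add: hull_subset)

lemma strictly_convex_set_subset_sing:
  assumes "S \<subseteq> {a}"
  shows "strictly_convex_set S"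
proof -
  have "rel_closure S \<subseteq> affine hull S"
    unfolding rel_closure_def using closure_of_subset_topspace by fastforce
  also have "\<dots> \<subseteq> {a}"
    using hull_mono[OF assms, of affine] by (simp add: hull_same)
  finally show ?thesis unfolding strictly_convex_set_def by auto
qed

subsection \<open>Sublevel sets of positively homogeneous functions\<close>

lemma affine_hull_sublevel_homogeneous:
  assumes "pos_homogeneous N" and "r > 0"
  shows "affine hull (sublevel UNIV N r) = UNIV"
proof -
  let ?S = "sublevel UNIV N r"
  have "w \<in> affine hull ?S" for w
  proof (cases "N w \<le> r")
    case True
    then show ?thesis by (intro hull_inc) (simp add: sublevel_def)
  next
    case False
    define c where "c = N w / r"
    have "c > 1" using False assms(2) unfolding c_def by simp
    have "(1 / c) *\<^sub>R w \<in> affine hull ?S"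
      using pos_homogeneousD[OF assms(1), of "1 / c" w] \<open>c > 1\<close> assms(2)
      by (intro hull_inc) (simp add: sublevel_def c_def)
    moreover have "0 \<in> affine hull ?S"
      using pos_homogeneous_zero[OF assms(1)] assms(2) by (intro hull_inc) (simp add: sublevel_def)
    ultimately have "(1 - c) *\<^sub>R 0 + c *\<^sub>R ((1 / c) *\<^sub>R w) \<in> affine hull ?S"
      by (intro mem_affine[OF affine_affine_hull]) simp_all
    then show ?thesis using \<open>c > 1\<close> by simp
  qed
  then show ?thesis by auto
qed

lemma interior_sublevel_homogeneous_less:
  fixes N :: "'a::{real_vector,topological_space} \<Rightarrow> real"
  assumes "tvs TYPE('a)" "pos_homogeneous N" "r > 0"
    and "z \<in> interior (sublevel UNIV N r)"
  shows "N z < r"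
proof (rule ccontr)
  assume "\<not> N z < r"
  obtain T where "open T" "z \<in> T" "T \<subseteq> sublevel UNIV N r"
    using assms(4) by (rule interiorE)
  with \<open>\<not> N z < r\<close> have "N z = r" by (auto simp: sublevel_def)
  \<comment> \<open>Scaling \<open>z\<close> slightly outwards stays in \<open>T\<close> but leaves the sublevel set.\<close>
  have "open ((\<lambda>s::real. s *\<^sub>R z) -` T)"
    by (rule open_vimage[OF \<open>open T\<close> tvs_continuous_on_ray[OF assms(1)]])
  moreover have "1 \<in> (\<lambda>s::real. s *\<^sub>R z) -` T" using \<open>z \<in> T\<close> by simp
  ultimately obtain e where "e > 0" "ball 1 e \<subseteq> (\<lambda>s::real. s *\<^sub>R z) -` T"
    using openE by blast
  moreover have "1 + e / 2 \<in> ball 1 e" using \<open>e > 0\<close> by (simp add: dist_real_def)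
  ultimately have "(1 + e / 2) *\<^sub>R z \<in> T" by blast
  with \<open>T \<subseteq> sublevel UNIV N r\<close> have "(1 + e / 2) * r \<le> r"
    using pos_homogeneousD[OF assms(2), of "1 + e / 2" z] \<open>e > 0\<close> \<open>N z = r\<close>
    by (auto simp: sublevel_def)
  with \<open>e > 0\<close> \<open>r > 0\<close> show False by (simp add: algebra_simps mult_le_0_iff)
qed

subsection \<open>From strictly sub-convex Minkowski norms\<close>

lemma minkowski_norm_iff:
  "minkowski_norm N \<longleftrightarrow> (\<forall>x. 0 \<le> N x) \<and> pos_homogeneous N \<and>
     (\<forall>x y. N (x + y) \<le> N x + N y) \<and> (\<forall>x. x \<noteq> 0 \<longrightarrow> N x \<noteq> 0)"
  unfolding minkowski_norm_def pos_homogeneous_def ..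

lemma minkowski_norm_pos:
  assumes "minkowski_norm N" "x \<noteq> 0"
  shows "N x > 0"
  using assms unfolding minkowski_norm_def by (metis order.not_eq_order_implies_strict)

lemma minkowski_norm_convex_comb:
  assumes "minkowski_norm N" "0 \<le> t" "t \<le> 1"
  shows "N ((1 - t) *\<^sub>R x + t *\<^sub>R y) \<le> (1 - t) * N x + t * N y"
proof -
  have hom: "pos_homogeneous N" using assms(1) unfolding minkowski_norm_iff by blast
  have scale: "N (c *\<^sub>R z) = c * N z" if "c \<ge> 0" for c z
    using that pos_homogeneousD[OF hom, of c z] pos_homogeneous_zero[OF hom]
    by (cases "c = 0") auto
  have "N ((1 - t) *\<^sub>R x + t *\<^sub>R y) \<le> N ((1 - t) *\<^sub>R x) + N (t *\<^sub>R y)"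
    using assms(1) unfolding minkowski_norm_def by blast
  also have "\<dots> = (1 - t) * N x + t * N y" using assms(2,3) by (simp add: scale)
  finally show ?thesis .
qed

lemma strict_convex_fun_on_powr_minkowski_norm:
  fixes N :: "'a::{real_vector,topological_space} \<Rightarrow> real"
  assumes "tvs TYPE('a)" "\<alpha> > 1" "strictly_sub_convex UNIV N" "minkowski_norm N"
  shows "strict_convex_fun_on UNIV (\<lambda>x. N x powr \<alpha>)"
  unfolding strict_convex_fun_on_def
proof (intro ballI impI allI)
  fix x y :: 'a and t :: real
  assume "x \<noteq> y" and t: "0 < t \<and> t < 1"
  have nonneg: "\<And>x. 0 \<le> N x" and hom: "pos_homogeneous N"
    using assms(4) unfolding minkowski_norm_iff by auto
  define z where "z = (1 - t) *\<^sub>R x + t *\<^sub>R y"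
  show "N z powr \<alpha> < (1 - t) * N x powr \<alpha> + t * N y powr \<alpha>"
  proof (cases "N x = N y")
    case True
    define r where "r = N x"
    have "r > 0"
      using minkowski_norm_pos[OF assms(4)] \<open>x \<noteq> y\<close> True unfolding r_def by (metis less_irrefl)
    have "x \<in> rel_closure (sublevel UNIV N r)" "y \<in> rel_closure (sublevel UNIV N r)"
      using subset_rel_closure True by (fastforce simp: sublevel_def r_def)+
    moreover have "z \<in> open_segment x y" using \<open>x \<noteq> y\<close> t unfolding z_def by (auto simp: in_segment)
    ultimately have "z \<in> rel_interior (sublevel UNIV N r)"
      using assms(3) \<open>x \<noteq> y\<close> unfolding strictly_sub_convex_def strictly_convex_set_def by blast
    then have "N z < r"
      using interior_sublevel_homogeneous_less[OF assms(1) hom \<open>r > 0\<close>]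
        rel_interior_eq_interior[OF affine_hull_sublevel_homogeneous[OF hom \<open>r > 0\<close>]] by simp
    then have "N z powr \<alpha> < r powr \<alpha>" using assms(2) nonneg by (intro powr_less_mono2) auto
    then show ?thesis using True by (simp add: r_def algebra_simps)
  next
    case False
    have "N z powr \<alpha> \<le> ((1 - t) * N x + t * N y) powr \<alpha>"
      using minkowski_norm_convex_comb[OF assms(4)] t nonneg assms(2)
      unfolding z_def by (intro powr_mono2) auto
    also have "\<dots> < (1 - t) * N x powr \<alpha> + t * N y powr \<alpha>"
      using strict_convex_fun_on_powr[OF assms(2)] nonneg False t
      unfolding strict_convex_fun_on_def by simp
    finally show ?thesis .
  qed
qed

lemma zero_in_interior_unit_sublevel:
  fixes N :: "'a::{real_vector,topological_space} \<Rightarrow> real"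
  assumes "strictly_sub_convex UNIV N" "minkowski_norm N"
  shows "0 \<in> interior (sublevel UNIV N 1)"
proof (cases "\<exists>w::'a. w \<noteq> 0")
  case False
  then have "sublevel UNIV N 1 = UNIV"
    using assms(2) unfolding minkowski_norm_iff sublevel_def
    by (metis (mono_tags) UNIV_eq_I mem_Collect_eq pos_homogeneous_zero zero_less_one less_imp_le)
  then show ?thesis by simp
next
  case True
  then obtain w :: 'a where "w \<noteq> 0" by blast
  have hom: "pos_homogeneous N" using assms(2) unfolding minkowski_norm_iff by blast
  define a b where "a = N w" and "b = N (- w)"
  have "a > 0" "b > 0"
    using minkowski_norm_pos[OF assms(2)] \<open>w \<noteq> 0\<close> unfolding a_def b_def by auto
  define u v where "u = (1 / a) *\<^sub>R w" and "v = (1 / b) *\<^sub>R (- w)"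
  have "N u = 1" "N v = 1"
    using pos_homogeneousD[OF hom] \<open>a > 0\<close> \<open>b > 0\<close> unfolding u_def v_def a_def b_def
    by (simp_all del: scaleR_minus_right)
  then have "u \<in> rel_closure (sublevel UNIV N 1)" "v \<in> rel_closure (sublevel UNIV N 1)"
    using subset_rel_closure by (fastforce simp: sublevel_def)+
  moreover have "u \<noteq> v"
  proof
    assume "u = v"
    then have "(1 / a + 1 / b) *\<^sub>R w = 0" unfolding u_def v_def by (simp add: algebra_simps)
    moreover have "1 / a + 1 / b > 0" using \<open>a > 0\<close> \<open>b > 0\<close> by (simp add: add_pos_pos)
    ultimately show False using \<open>w \<noteq> 0\<close> by simp
  qed
  moreover have "0 \<in> open_segment u v"
  proof -
    define t where "t = b / (a + b)"
    have "0 < t" "t < 1" using \<open>a > 0\<close> \<open>b > 0\<close> unfolding t_def by auto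
    moreover have "(1 - t) *\<^sub>R u + t *\<^sub>R v = 0"
      using \<open>a > 0\<close> \<open>b > 0\<close> unfolding t_def u_def v_def by (simp add: field_simps)
    ultimately show ?thesis using \<open>u \<noteq> v\<close> unfolding in_segment by metis
  qed
  ultimately have "0 \<in> rel_interior (sublevel UNIV N 1)"
    using assms(1) unfolding strictly_sub_convex_def strictly_convex_set_def by blast
  then show ?thesis
    using rel_interior_eq_interior[OF affine_hull_sublevel_homogeneous[OF hom]] by simp
qed

lemma continuous_on_subadditive_homogeneous:
  fixes N :: "'a::{real_vector,topological_space} \<Rightarrow> real"
  assumes "tvs TYPE('a)" "pos_homogeneous N" "\<And>x y. N (x + y) \<le> N x + N y"
    and "0 \<in> interior (sublevel UNIV N 1)"
  shows "continuous_on UNIV N"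
  unfolding continuous_on_topological
proof (intro ballI allI impI)
  fix p :: 'a and B :: "real set"
  assume "open B" "N p \<in> B"
  then obtain e where "e > 0" "ball (N p) e \<subseteq> B" using openE by blast
  obtain U where "open U" "0 \<in> U" "U \<subseteq> sublevel UNIV N 1"
    using assms(4) by (rule interiorE)
  \<comment> \<open>Pull the symmetric neighbourhood \<open>U \<inter> -U\<close> of \<open>0\<close> back along \<open>q \<mapsto> (2/e)(q - p)\<close>.\<close>
  define A where "A = (\<lambda>q. (2 / e) *\<^sub>R (q - p)) -` U \<inter> (\<lambda>q. (- 2 / e) *\<^sub>R (q - p)) -` U"
  have "open A"
    unfolding A_def
    by (intro open_Int open_vimage \<open>open U\<close> tvs_continuous_on_scaleR_diff[OF assms(1)])
  moreover have "p \<in> A" using \<open>0 \<in> U\<close> unfolding A_def by simp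
  moreover have "N q \<in> B" if "q \<in> A" for q
  proof -
    have small: "N (c *\<^sub>R (q - p)) \<le> e / 2" if "c = 1 \<or> c = - 1" for c
    proof -
      have "(2 / e) *\<^sub>R (c *\<^sub>R (q - p)) \<in> U"
        using \<open>q \<in> A\<close> that unfolding A_def by auto
      then have "N ((2 / e) *\<^sub>R (c *\<^sub>R (q - p))) \<le> 1"
        using \<open>U \<subseteq> sublevel UNIV N 1\<close> by (auto simp: sublevel_def)
      then have "(2 / e) * N (c *\<^sub>R (q - p)) \<le> 1"
        using pos_homogeneousD[OF assms(2)] \<open>e > 0\<close> by (simp del: scaleR_scaleR)
      with \<open>e > 0\<close> show ?thesis by (simp add: field_simps)
    qed
    have "N q \<le> N p + N (q - p)" using assms(3)[of p "q - p"] by simp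
    moreover have "N p \<le> N q + N (p - q)" using assms(3)[of q "p - q"] by simp
    ultimately have "\<bar>N q - N p\<bar> < e"
      using small[of 1] small[of "- 1"] \<open>e > 0\<close> by (simp add: minus_diff_eq)
    then show ?thesis using \<open>ball (N p) e \<subseteq> B\<close> by (auto simp: dist_real_def)
  qed
  ultimately show "\<exists>A. open A \<and> p \<in> A \<and> (\<forall>q\<in>UNIV. q \<in> A \<longrightarrow> N q \<in> B)" by blast
qed

subsection \<open>From strictly convex powers\<close>

lemma strict_convex_fun_on_imp_convex_on:
  assumes "convex C" "strict_convex_fun_on C g"
  shows "convex_on C g"
proof (rule convex_onI[OF _ assms(1)])
  fix t :: real and x y assume "0 < t" "t < 1" "x \<in> C" "y \<in> C"
  with assms(2) show "g ((1 - t) *\<^sub>R x + t *\<^sub>R y) \<le> (1 - t) * g x + t * g y"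
    unfolding strict_convex_fun_on_def
    by (cases "x = y") (auto simp: algebra_simps intro: less_imp_le)
qed

lemma nonzero_of_strict_convex_powr:
  assumes "pos_homogeneous N" "strict_convex_fun_on UNIV (\<lambda>x. N x powr \<alpha>)" "x \<noteq> 0"
  shows "N x \<noteq> 0"
proof
  assume "N x = 0"
  have "N ((1 / 2) *\<^sub>R x) powr \<alpha> < (1 / 2) * N x powr \<alpha> + (1 / 2) * N 0 powr \<alpha>"
    using assms(2)[unfolded strict_convex_fun_on_def, rule_format, of x 0 "1 / 2"] assms(3) by simp
  with \<open>N x = 0\<close> show False
    using pos_homogeneousD[OF assms(1), of "1 / 2" x] pos_homogeneous_zero[OF assms(1)] by simp
qed

lemma subadditive_of_convex_powr:
  assumes "\<alpha> > 0" "\<And>x. 0 \<le> N x" "pos_homogeneous N" "\<And>x. x \<noteq> 0 \<Longrightarrow> N x \<noteq> 0"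
    and "convex_on UNIV (\<lambda>x. N x powr \<alpha>)"
  shows "N (x + y) \<le> N x + N y"
proof (cases "x = 0 \<or> y = 0")
  case True
  then show ?thesis using pos_homogeneous_zero[OF assms(3)] by auto
next
  case False
  then have "N x > 0" "N y > 0" using assms(2,4) by (metis order.not_eq_order_implies_strict)+
  \<comment> \<open>\<open>(x + y) / s\<close> is a convex combination of the unit vectors \<open>x / N x\<close> and \<open>y / N y\<close>.\<close>
  define s where "s = N x + N y"
  define t where "t = N y / s"
  have "s > 0" using \<open>N x > 0\<close> \<open>N y > 0\<close> unfolding s_def by simp
  have "0 \<le> t" "t \<le> 1" "1 - t = N x / s"
    using \<open>N x > 0\<close> \<open>N y > 0\<close> \<open>s > 0\<close> unfolding t_def by (simp_all add: field_simps s_def)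
  then have coeff: "(1 - t) / N x = 1 / s" "t / N y = 1 / s"
    using \<open>N x > 0\<close> \<open>N y > 0\<close> unfolding t_def by simp_all
  have unit: "N ((1 / N x) *\<^sub>R x) = 1" "N ((1 / N y) *\<^sub>R y) = 1"
    using pos_homogeneousD[OF assms(3)] \<open>N x > 0\<close> \<open>N y > 0\<close> by simp_all
  have "(1 / s) *\<^sub>R (x + y) = (1 - t) *\<^sub>R ((1 / N x) *\<^sub>R x) + t *\<^sub>R ((1 / N y) *\<^sub>R y)"
    by (simp add: coeff scaleR_add_right)
  then have "N ((1 / s) *\<^sub>R (x + y)) powr \<alpha> \<le> 1"
    using convex_onD[OF assms(5) \<open>0 \<le> t\<close> \<open>t \<le> 1\<close>, of "(1 / N x) *\<^sub>R x" "(1 / N y) *\<^sub>R y"] unit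
    by simp
  then have "N ((1 / s) *\<^sub>R (x + y)) \<le> 1"
    using assms(1,2) by (metis not_le powr_less_mono2 powr_one_eq_one zero_le_one)
  moreover have "N (x + y) = s * N ((1 / s) *\<^sub>R (x + y))"
    using pos_homogeneousD[OF assms(3), of "1 / s" "x + y"] \<open>s > 0\<close> by simp
  ultimately show ?thesis
    using \<open>s > 0\<close> unfolding s_def by (simp add: mult_left_le)
qed

lemma strictly_convex_set_sublevel_of_strict_convex_powr:
  fixes N :: "'a::{real_vector,topological_space} \<Rightarrow> real"
  assumes "\<alpha> > 0" "\<And>x. 0 \<le> N x" "pos_homogeneous N" "continuous_on UNIV N"
    and "strict_convex_fun_on UNIV (\<lambda>x. N x powr \<alpha>)"
  shows "strictly_convex_set (sublevel UNIV N r)"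
proof (cases "r > 0")
  case False
  have "sublevel UNIV N r \<subseteq> {0}"
  proof
    fix x assume "x \<in> sublevel UNIV N r"
    then have "N x = 0" using assms(2)[of x] False by (simp add: sublevel_def)
    then show "x \<in> {0}" using nonzero_of_strict_convex_powr[OF assms(3,5)] by blast
  qed
  then show ?thesis by (rule strictly_convex_set_subset_sing)
next
  case True
  let ?S = "sublevel UNIV N r"
  have hull: "affine hull ?S = UNIV" by (rule affine_hull_sublevel_homogeneous[OF assms(3) True])
  have "closed ?S"
    using closed_vimage[OF closed_atMost assms(4)] by (simp add: sublevel_def vimage_def)
  then have closure: "rel_closure ?S = ?S" by (simp add: rel_closure_eq_closure[OF hull])
  have "open {x. N x < r}"
    using open_vimage[OF open_lessThan assms(4)] by (simp add: vimage_def)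
  then have interior: "{x. N x < r} \<subseteq> rel_interior ?S"
    unfolding rel_interior_eq_interior[OF hull]
    by (intro interior_maximal) (auto simp: sublevel_def)
  show ?thesis
    unfolding strictly_convex_set_def closure
  proof (intro ballI impI subsetI)
    fix x y z
    assume "x \<in> ?S" "y \<in> ?S" "x \<noteq> y" "z \<in> open_segment x y"
    then obtain t where t: "0 < t" "t < 1" and z: "z = (1 - t) *\<^sub>R x + t *\<^sub>R y"
      by (auto simp: in_segment)
    have "N z powr \<alpha> < (1 - t) * N x powr \<alpha> + t * N y powr \<alpha>"
      using assms(5) \<open>x \<noteq> y\<close> t unfolding strict_convex_fun_on_def z by blast
    also have "\<dots> \<le> (1 - t) * r powr \<alpha> + t * r powr \<alpha>"
      using \<open>x \<in> ?S\<close> \<open>y \<in> ?S\<close> t assms(1,2)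
      by (intro add_mono mult_left_mono powr_mono2) (auto simp: sublevel_def)
    finally have "N z < r"
      using powr_mono2[of \<alpha> r "N z"] assms(1) True by (auto simp: algebra_simps not_less[symmetric])
    with interior show "z \<in> rel_interior ?S" by blast
  qed
qed

theorem mainTheorem2:
  fixes N :: "'a::{real_vector,topological_space} \<Rightarrow> real" and \<alpha> :: real
  assumes "tvs TYPE('a)" and "\<alpha> > 1"
  shows "(strictly_sub_convex UNIV N \<and> minkowski_norm N) \<longleftrightarrow>
         ((\<forall>x. 0 \<le> N x) \<and> (\<forall>x. \<forall>c>0. N (c *\<^sub>R x) = c * N x) \<and>
          continuous_on UNIV N \<and> strict_convex_fun_on UNIV (\<lambda>x. N x powr \<alpha>))"
  unfolding pos_homogeneous_def[symmetric]
proof (intro iffI conjI; elim conjE)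
  assume ssc: "strictly_sub_convex UNIV N" and norm: "minkowski_norm N"
  then show "\<forall>x. 0 \<le> N x" "pos_homogeneous N"
    unfolding minkowski_norm_iff by auto
  show "continuous_on UNIV N"
    using continuous_on_subadditive_homogeneous[OF assms(1) _ _ zero_in_interior_unit_sublevel[OF ssc norm]]
      norm unfolding minkowski_norm_iff by blast
  show "strict_convex_fun_on UNIV (\<lambda>x. N x powr \<alpha>)"
    by (rule strict_convex_fun_on_powr_minkowski_norm[OF assms ssc norm])
next
  assume nonneg: "\<forall>x. 0 \<le> N x" and hom: "pos_homogeneous N" and cont: "continuous_on UNIV N"
    and strict: "strict_convex_fun_on UNIV (\<lambda>x. N x powr \<alpha>)"
  have "\<alpha> > 0" using assms(2) by simp
  show "strictly_sub_convex UNIV N"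
    unfolding strictly_sub_convex_def
    using strictly_convex_set_sublevel_of_strict_convex_powr[OF \<open>\<alpha> > 0\<close> _ hom cont strict] nonneg
    by blast
  have "convex_on UNIV (\<lambda>x. N x powr \<alpha>)"
    by (rule strict_convex_fun_on_imp_convex_on[OF convex_UNIV strict])
  then show "minkowski_norm N"
    unfolding minkowski_norm_iff
    using nonneg hom nonzero_of_strict_convex_powr[OF hom strict]
      subadditive_of_convex_powr[OF \<open>\<alpha> > 0\<close> _ hom] by metis
qed

end
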